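(* Let $X,X_1,X_2,\dots$ be real random variables on a probability space $(\Omega,\mathcal{F},P)$, and let $F$ and $F_n$ be the distribution functions of $X$ and $X_n$. Suppose that $F$ is locally Lipschitz continuous at each continuity point of $F$, and that $\sum_{n=1}^\infty\|X_n-X\|_\infty<\infty$. Then for every continuity point $x$ of $F$, $\sum_{n=1}^\infty |F_n(x)-F(x)|<\infty$.
   Context: The distribution function of a random variable $Y$ is $x\mapsto P(Y\le x)$. $\|\cdot\|_\infty$ denotes the essential supremum norm, i.e. the $L^\infty(P)$ norm. "$F$ is locally Lipschitz continuous at $x$" means that there exist constants $K\ge 0$ and $\delta>0$ such that $|F(u)-F(v)|\le K|u-v|$ for all $u,v\in(x-\delta,x+\delta)$. *)

theory Defs
  imports "HOL-Probability.Probability"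
begin

definition locally_lipschitz_at :: "(real \<Rightarrow> real) \<Rightarrow> real \<Rightarrow> bool" where
  "locally_lipschitz_at F x \<longleftrightarrow>
     (\<exists>K \<ge> 0. \<exists>\<delta> > 0. \<forall>u \<in> {x - \<delta> <..< x + \<delta>}. \<forall>v \<in> {x - \<delta> <..< x + \<delta>}.
        \<bar>F u - F v\<bar> \<le> K * \<bar>u - v\<bar>)"

definition distr_fun :: "'a measure \<Rightarrow> ('a \<Rightarrow> real) \<Rightarrow> real \<Rightarrow> real" where
  "distr_fun M Y x = measure M {\<omega> \<in> space M. Y \<omega> \<le> x}"

definition Linf_norm :: "'a measure \<Rightarrow> ('a \<Rightarrow> real) \<Rightarrow> ereal" where
  "Linf_norm M Y = esssup M (\<lambda>\<omega>. ereal \<bar>Y \<omega>\<bar>)"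

end

theory Submission
  imports Defs
begin

text \<open>If \<open>|X\<^sub>n - X| \<le> \<epsilon>\<^sub>n\<close> almost surely, then \<open>F(x - \<epsilon>\<^sub>n) \<le> F\<^sub>n(x) \<le> F(x + \<epsilon>\<^sub>n)\<close>. At a
  continuity point of \<open>F\<close>, local Lipschitz continuity turns this into
  \<open>|F\<^sub>n(x) - F(x)| \<le> K \<epsilon>\<^sub>n\<close> once \<open>\<epsilon>\<^sub>n\<close> is small, and \<open>\<epsilon>\<^sub>n = \<parallel>X\<^sub>n - X\<parallel>\<^sub>\<infinity>\<close> is summable.\<close>

lemma Linf_norm_nonneg:
  assumes "emeasure M (space M) \<noteq> 0"
  shows "0 \<le> Linf_norm M Y"
proof -
  have "esssup M (\<lambda>_. 0::ereal) \<le> Linf_norm M Y"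
    unfolding Linf_norm_def by (rule esssup_mono) auto
  then show ?thesis
    using esssup_const[OF assms, of "0::ereal"] by simp
qed

lemma AE_abs_le_Linf_norm:
  assumes "Linf_norm M Y = ereal c"
  shows "AE \<omega> in M. \<bar>Y \<omega>\<bar> \<le> c"
proof -
  have "AE \<omega> in M. ereal \<bar>Y \<omega>\<bar> \<le> Linf_norm M Y"
    unfolding Linf_norm_def by (rule esssup_AE)
  then show ?thesis
    by eventually_elim (simp add: assms)
qed

lemma distr_fun_sandwich_AE:
  assumes "finite_measure M" "X \<in> borel_measurable M" "Y \<in> borel_measurable M"
    and "AE \<omega> in M. \<bar>Y \<omega> - X \<omega>\<bar> \<le> c"
  shows "distr_fun M X (x - c) \<le> distr_fun M Y x" "distr_fun M Y x \<le> distr_fun M X (x + c)"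
proof -
  interpret finite_measure M by fact
  have sets: "{\<omega> \<in> space M. X \<omega> \<le> t} \<in> sets M" "{\<omega> \<in> space M. Y \<omega> \<le> t} \<in> sets M" for t
    using assms(2,3) by measurable
  have "AE \<omega> in M. X \<omega> \<le> x - c \<longrightarrow> Y \<omega> \<le> x" "AE \<omega> in M. Y \<omega> \<le> x \<longrightarrow> X \<omega> \<le> x + c"
    using assms(4) by (eventually_elim, auto)+
  then show "distr_fun M X (x - c) \<le> distr_fun M Y x" "distr_fun M Y x \<le> distr_fun M X (x + c)"
    unfolding distr_fun_def using sets by (auto intro!: finite_measure_mono_AE)
qed

lemma summable_abs_diff_if_sandwiched:
  fixes F :: "real \<Rightarrow> real"
  assumes "locally_lipschitz_at F x" "summable \<epsilon>" "\<And>n. 0 \<le> \<epsilon> n"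
    and "\<And>n. F (x - \<epsilon> n) \<le> g n" "\<And>n. g n \<le> F (x + \<epsilon> n)"
  shows "summable (\<lambda>n. \<bar>g n - F x\<bar>)"
proof -
  obtain K \<delta> where "\<delta> > 0" and lip: "\<And>u v. u \<in> {x - \<delta> <..< x + \<delta>} \<Longrightarrow>
      v \<in> {x - \<delta> <..< x + \<delta>} \<Longrightarrow> \<bar>F u - F v\<bar> \<le> K * \<bar>u - v\<bar>"
    using assms(1) unfolding locally_lipschitz_at_def by blast
  have "\<epsilon> \<longlonglongrightarrow> 0"
    using assms(2) by (rule summable_LIMSEQ_zero)
  then have "eventually (\<lambda>n. \<epsilon> n < \<delta>) sequentially"
    using \<open>\<delta> > 0\<close> by (rule order_tendstoD)
  then have "eventually (\<lambda>n. norm \<bar>g n - F x\<bar> \<le> K * \<epsilon> n) sequentially"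
  proof eventually_elim
    case (elim n)
    have "\<bar>F (x + \<epsilon> n) - F x\<bar> \<le> K * \<epsilon> n" "\<bar>F (x - \<epsilon> n) - F x\<bar> \<le> K * \<epsilon> n"
      using lip[of "x + \<epsilon> n" x] lip[of "x - \<epsilon> n" x] elim assms(3)[of n] \<open>\<delta> > 0\<close> by auto
    then show ?case
      using assms(4,5)[of n] by auto
  qed
  moreover have "summable (\<lambda>n. K * \<epsilon> n)"
    using assms(2) by (rule summable_mult)
  ultimately show ?thesis
    by (rule summable_comparison_test_ev)
qed

theorem proposition3p1:
  fixes M :: "'a measure" and X :: "'a \<Rightarrow> real" and Xn :: "nat \<Rightarrow> 'a \<Rightarrow> real"
  assumes "prob_space M"
    and "X \<in> borel_measurable M"
    and "\<And>n. Xn n \<in> borel_measurable M"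
    and "\<And>x. isCont (distr_fun M X) x \<Longrightarrow> locally_lipschitz_at (distr_fun M X) x"
    and "(\<Sum>n. Linf_norm M (\<lambda>\<omega>. Xn (Suc n) \<omega> - X \<omega>)) < \<infinity>"
  shows "\<And>x. isCont (distr_fun M X) x \<Longrightarrow>
           summable (\<lambda>n. \<bar>distr_fun M (Xn (Suc n)) x - distr_fun M X x\<bar>)"
proof -
  fix x assume "isCont (distr_fun M X) x"
  interpret prob_space M by fact
  define L where "L n = Linf_norm M (\<lambda>\<omega>. Xn (Suc n) \<omega> - X \<omega>)" for n
  have L_nonneg: "0 \<le> L n" for n
    unfolding L_def by (rule Linf_norm_nonneg) (simp add: emeasure_space_1)
  have L_sum_finite: "suminf L \<noteq> \<infinity>"
    using assms(5) unfolding L_def by auto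
  have L_real: "L n = ereal (real_of_ereal (L n))" for n
    using L_nonneg[of n] suminf_PInfty[OF L_nonneg L_sum_finite, of n] by (cases "L n") auto
  have "AE \<omega> in M. \<bar>Xn (Suc n) \<omega> - X \<omega>\<bar> \<le> real_of_ereal (L n)" for n
    using L_real[of n] unfolding L_def by (rule AE_abs_le_Linf_norm)
  note sandwich = distr_fun_sandwich_AE[OF finite_measure_axioms assms(2,3) this]
  show "summable (\<lambda>n. \<bar>distr_fun M (Xn (Suc n)) x - distr_fun M X x\<bar>)"
    using assms(4)[OF \<open>isCont (distr_fun M X) x\<close>] summable_real_of_ereal[OF L_nonneg L_sum_finite]
  proof (rule summable_abs_diff_if_sandwiched)
    show "0 \<le> real_of_ereal (L n)" for n
      using L_nonneg[of n] by (simp add: real_of_ereal_pos)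
  qed (fact sandwich)+
qed

end
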